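(* Let $\Lambda=(\lambda_i)_{i=0}^\infty$ be a strictly increasing sequence of non-negative reals with $\lambda_0=0$, $\lambda_1\geq 1$ and $\sum_{i=1}^\infty 1/\lambda_i<\infty$, and let $M(\Lambda)=\overline{\operatorname{span}}\{t^{\lambda_i}: i\geq 0\}\subseteq C[0,1]$ with the sup-norm. Then $M(\Lambda)$ is not locally almost square.
   Context: $C[0,1]$ is the space of real-valued continuous functions on $[0,1]$ with the sup-norm. A Banach space $X$ with closed unit ball $B_X$ and unit sphere $S_X$ is locally almost square if for every $x\in S_X$ there exists a sequence $(y_n)$ in $B_X$ such that $\|y_n\|\to 1$ and $\|x\pm y_n\|\to 1$. *)

theory Defs
  imports "HOL-Analysis.Analysis"
begin

text \<open>Elements of C[0,1] are represented as functions real \<Rightarrow> real continuous on {0..1};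
  only their values on {0..1} matter (sup-norm over {0..1}).\<close>

definition supnorm01 :: "(real \<Rightarrow> real) \<Rightarrow> real" where
  "supnorm01 f = (SUP t\<in>{0..1}. \<bar>f t\<bar>)"

text \<open>The monomial t^l on [0,1], with the convention t^0 = 1 (also at t = 0).\<close>
definition mon :: "real \<Rightarrow> real \<Rightarrow> real" where
  "mon l t = (if l = 0 then 1 else t powr l)"

definition muntz_space :: "(nat \<Rightarrow> real) \<Rightarrow> (real \<Rightarrow> real) set" where
  "muntz_space lam = {f. continuous_on {0..1} f \<and>
     (\<forall>e>0. \<exists>n c. supnorm01 (\<lambda>t. f t - (\<Sum>i<n. c i * mon (lam i) t)) < e)}"

definition locally_almost_square :: "(real \<Rightarrow> real) set \<Rightarrow> bool" where
  "locally_almost_square X \<longleftrightarrow>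
     (\<forall>x\<in>X. supnorm01 x = 1 \<longrightarrow>
        (\<exists>y :: nat \<Rightarrow> real \<Rightarrow> real.
            (\<forall>n. y n \<in> X \<and> supnorm01 (y n) \<le> 1) \<and>
            (\<lambda>n. supnorm01 (y n)) \<longlonglongrightarrow> 1 \<and>
            (\<lambda>n. supnorm01 (\<lambda>t. x t + y n t)) \<longlonglongrightarrow> 1 \<and>
            (\<lambda>n. supnorm01 (\<lambda>t. x t - y n t)) \<longlonglongrightarrow> 1))"

end

theory Submission
  imports Defs
begin

text \<open>Since \<open>\<lambda>\<^sub>0 = 0\<close>, the constant function 1 lies in \<open>M(\<Lambda>)\<close>, and it is a norm-one element
  that admits no almost-square sequence: for every \<open>y\<close> in \<open>C[0,1]\<close> one has
  \<open>max \<parallel>1 + y\<parallel> \<parallel>1 - y\<parallel> \<ge> 1 + \<parallel>y\<parallel>\<close>, because at any \<open>t\<close> one of \<open>1 \<plusminus> y(t)\<close> has modulus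
  \<open>1 + \<bar>y(t)\<bar>\<close>. So \<open>\<parallel>y\<^sub>n\<parallel> \<rightarrow> 1\<close> and \<open>\<parallel>1 \<plusminus> y\<^sub>n\<parallel> \<rightarrow> 1\<close> are incompatible.\<close>

lemma supnorm01_le:
  assumes "\<And>t. t \<in> {0..1} \<Longrightarrow> \<bar>f t\<bar> \<le> B"
  shows "supnorm01 f \<le> B"
  unfolding supnorm01_def using assms by (intro cSUP_least) auto

lemma abs_le_supnorm01:
  assumes "continuous_on {0..1} f" and "t \<in> {0..1}"
  shows "\<bar>f t\<bar> \<le> supnorm01 f"
proof -
  have "compact ((\<lambda>t. \<bar>f t\<bar>) ` {0..1})"
    using assms(1) by (intro compact_continuous_image continuous_on_rabs) auto
  then have "bdd_above ((\<lambda>t. \<bar>f t\<bar>) ` {0..1})"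
    by (intro bounded_imp_bdd_above compact_imp_bounded)
  then show ?thesis
    unfolding supnorm01_def using assms(2) by (intro cSUP_upper)
qed

lemma supnorm01_const [simp]: "supnorm01 (\<lambda>_. c) = \<bar>c\<bar>"
  by (simp add: supnorm01_def)

lemma supnorm01_plus_one_le_max:
  assumes "continuous_on {0..1} g"
  shows "supnorm01 g + 1 \<le> max (supnorm01 (\<lambda>t. 1 + g t)) (supnorm01 (\<lambda>t. 1 - g t))"
proof -
  have "\<bar>g t\<bar> \<le> max (supnorm01 (\<lambda>t. 1 + g t)) (supnorm01 (\<lambda>t. 1 - g t)) - 1"
    if t: "t \<in> {0..1}" for t
  proof -
    have "\<bar>1 + g t\<bar> \<le> supnorm01 (\<lambda>t. 1 + g t)"
      using assms t by (intro abs_le_supnorm01 continuous_intros)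
    moreover have "\<bar>1 - g t\<bar> \<le> supnorm01 (\<lambda>t. 1 - g t)"
      using assms t by (intro abs_le_supnorm01 continuous_intros)
    ultimately show ?thesis by linarith
  qed
  then have "supnorm01 g \<le> max (supnorm01 (\<lambda>t. 1 + g t)) (supnorm01 (\<lambda>t. 1 - g t)) - 1"
    by (rule supnorm01_le)
  then show ?thesis by linarith
qed

lemma not_locally_almost_square_if_const_one:
  assumes cont: "\<And>f. f \<in> X \<Longrightarrow> continuous_on {0..1} f"
    and one: "(\<lambda>_. 1) \<in> X"
  shows "\<not> locally_almost_square X"
proof
  assume "locally_almost_square X"
  then obtain y :: "nat \<Rightarrow> real \<Rightarrow> real" where
    y_in: "\<And>n. y n \<in> X" and
    y_norm: "(\<lambda>n. supnorm01 (y n)) \<longlonglongrightarrow> 1" and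
    plus: "(\<lambda>n. supnorm01 (\<lambda>t. 1 + y n t)) \<longlonglongrightarrow> 1" and
    minus: "(\<lambda>n. supnorm01 (\<lambda>t. 1 - y n t)) \<longlonglongrightarrow> 1"
  proof -
    have "supnorm01 (\<lambda>_. 1) = 1" by simp
    with \<open>locally_almost_square X\<close> one show thesis
      unfolding locally_almost_square_def using that by blast
  qed
  have "(\<lambda>n. supnorm01 (y n) + 1) \<longlonglongrightarrow> 1 + 1"
    by (intro tendsto_intros y_norm)
  moreover have "(\<lambda>n. max (supnorm01 (\<lambda>t. 1 + y n t)) (supnorm01 (\<lambda>t. 1 - y n t)))
      \<longlonglongrightarrow> max 1 1"
    by (intro tendsto_intros plus minus)
  ultimately have "(1::real) + 1 \<le> max 1 1"
    using supnorm01_plus_one_le_max[OF cont[OF y_in]] by (intro LIMSEQ_le) auto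
  then show False by simp
qed

lemma const_one_in_muntz_space:
  fixes lam :: "nat \<Rightarrow> real"
  assumes "lam 0 = 0"
  shows "(\<lambda>_. 1) \<in> muntz_space lam"
proof -
  have "supnorm01 (\<lambda>t. 1 - (\<Sum>i<1. 1 * mon (lam i) t)) = 0"
    using assms by (simp add: mon_def)
  then show ?thesis
    unfolding muntz_space_def by (auto intro!: exI[of _ 1] exI[of _ "\<lambda>_. 1"])
qed

theorem mainTheorem4:
  fixes lam :: "nat \<Rightarrow> real"
  assumes "strict_mono lam"
    and "\<forall>i. lam i \<ge> 0"
    and "lam 0 = 0"
    and "lam 1 \<ge> 1"
    and "summable (\<lambda>i. 1 / lam (Suc i))"
  shows "\<not> locally_almost_square (muntz_space lam)"
  using const_one_in_muntz_space[of lam, OF assms(3)]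
  by (intro not_locally_almost_square_if_const_one) (auto simp: muntz_space_def)

end
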